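(* Let $n\ge 1$ and let $\mathsf{Q}:\mathbb{R}\to SO(n)$ be a map whose entries are twice continuously differentiable real functions. Define $\mathsf{P}(\tau):=\mathsf{Q}(\tau)^{\mathsf T}\,\mathsf{Q}''(\tau)$. Then for every $\tau\in\mathbb{R}$, every negative eigenvalue of $\operatorname{sym}(\mathsf{P}(\tau))$ (if any exists) has even algebraic multiplicity.
   Context: $\mathsf{Q}''$ denotes the entrywise second derivative of $\mathsf{Q}$; for a square real matrix $\mathsf{A}$, $\operatorname{sym}(\mathsf{A}):=\tfrac12(\mathsf{A}+\mathsf{A}^{\mathsf T})$. *)

theory Defs
  imports "HOL-Analysis.Derivative" "Jordan_Normal_Form.Char_Poly"
begin

definition mat_second_deriv :: "nat \<Rightarrow> (real \<Rightarrow> real mat) \<Rightarrow> real \<Rightarrow> real mat" where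
  "mat_second_deriv n Q \<tau> = mat n n (\<lambda>(i,j). deriv (deriv (\<lambda>t. Q t $$ (i,j))) \<tau>)"

definition sym_mat :: "real mat \<Rightarrow> real mat" where
  "sym_mat A = (1/2) \<cdot>\<^sub>m (A + A\<^sup>T)"

definition alg_mult :: "real mat \<Rightarrow> real \<Rightarrow> nat" where
  "alg_mult A x = Polynomial.order x (char_poly A)"

definition C2_real :: "(real \<Rightarrow> real) \<Rightarrow> bool" where
  "C2_real f \<longleftrightarrow> (\<forall>t. f differentiable (at t)) \<and> (\<forall>t. deriv f differentiable (at t))
     \<and> continuous_on UNIV (deriv (deriv f))"

end

theory Submission
  imports Defs
begin

(* Differentiating Q^T Q = I twice shows that A = Q^T Q' is skew-symmetric and that
   sym (Q^T Q'') = - Q'^T Q' = A^2. For skew A, s^2 I - A^2 = (sI - A)(sI - A)^T, so the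
   characteristic polynomial p of A^2 satisfies p(x^2) = q(x)^2, q the characteristic
   polynomial of A. A negative root c of p is z^2 for some z <> 0 in C, and its
   multiplicity is ord_z (q^2) = 2 ord_z q. *)

interpretation of_real_poly_hom: map_poly_inj_idom_divide_hom "of_real :: real \<Rightarrow> complex" ..

lemma order_pcompose_square:
  fixes p :: "'a :: {idom, ring_char_0} poly"
  assumes "p \<noteq> 0" and "z \<noteq> 0"
  shows "order z (p \<circ>\<^sub>p [:0, 0, 1:]) = order (z^2) p"
proof -
  define k where "k = order (z^2) p"
  obtain r where p: "p = [:-(z^2), 1:]^k * r" and "\<not> [:-(z^2), 1:] dvd r"
    using order_decomp[OF \<open>p \<noteq> 0\<close>] unfolding k_def by blast
  then have "poly r (z^2) \<noteq> 0"
    by (simp add: poly_eq_0_iff_dvd)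
  have factor: "[:-(z^2), 1:] \<circ>\<^sub>p [:0, 0, 1:] = [:-z, 1:] * [:z, 1:]"
    by (simp add: power2_eq_square)
  have "p \<circ>\<^sub>p [:0, 0, 1:] = ([:-(z^2), 1:] \<circ>\<^sub>p [:0, 0, 1:])^k * (r \<circ>\<^sub>p [:0, 0, 1:])"
    unfolding p by (simp only: pcompose_mult pcompose_hom.hom_power)
  also have "\<dots> = [:-z, 1:]^k * ([:z, 1:]^k * (r \<circ>\<^sub>p [:0, 0, 1:]))"
    unfolding factor power_mult_distrib by (simp only: mult.assoc)
  finally have decomp: "p \<circ>\<^sub>p [:0, 0, 1:] = [:-z, 1:]^k * ([:z, 1:]^k * (r \<circ>\<^sub>p [:0, 0, 1:]))" .
  have "poly ([:z, 1:]^k * (r \<circ>\<^sub>p [:0, 0, 1:])) z \<noteq> 0"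
    using \<open>poly r (z^2) \<noteq> 0\<close> \<open>z \<noteq> 0\<close>
    by (simp add: poly_pcompose power2_eq_square flip: mult_2)
  then show ?thesis
    unfolding decomp k_def
    by (subst order_mult) (auto simp: order_0I)
qed

lemma even_order_if_pcompose_square_eq_square:
  fixes p q :: "'a :: {idom, ring_char_0} poly"
  assumes sq: "p \<circ>\<^sub>p [:0, 0, 1:] = q^2" and "p \<noteq> 0" and "z \<noteq> 0"
  shows "even (order (z^2) p)"
proof -
  have "q \<noteq> 0"
    using sq \<open>p \<noteq> 0\<close> by (auto simp: pcompose_eq_0)
  have "order (z^2) p = order z (q^2)"
    using order_pcompose_square[OF \<open>p \<noteq> 0\<close> \<open>z \<noteq> 0\<close>] sq by simp
  also have "\<dots> = 2 * order z q"
    using \<open>q \<noteq> 0\<close> by (simp add: power2_eq_square order_mult)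
  finally show ?thesis by simp
qed

lemma even_order_neg_if_pcompose_square_eq_square:
  fixes p q :: "real poly"
  assumes sq: "p \<circ>\<^sub>p [:0, 0, 1:] = q^2" and "p \<noteq> 0" and "c < 0"
  shows "even (order c p)"
proof -
  define z where "z = \<i> * complex_of_real (sqrt (-c))"
  have "z^2 = complex_of_real c" and "z \<noteq> 0"
    using \<open>c < 0\<close> by (simp_all add: z_def power_mult_distrib flip: of_real_power)
  have "map_poly complex_of_real p \<circ>\<^sub>p [:0, 0, 1:] = (map_poly complex_of_real q)^2"
    using arg_cong[OF sq, of "map_poly complex_of_real"]
    by (simp add: of_real_hom.map_poly_pcompose of_real_poly_hom.hom_power)
  from even_order_if_pcompose_square_eq_square[OF this _ \<open>z \<noteq> 0\<close>] \<open>p \<noteq> 0\<close>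
  show ?thesis
    unfolding \<open>z^2 = complex_of_real c\<close> of_real_poly_hom.order_hom by simp
qed

lemma char_poly_square_of_skew:
  fixes A :: "'a :: field_char_0 mat"
  assumes A: "A \<in> carrier_mat n n" and skew: "A\<^sup>T = - A"
  shows "char_poly (A * A) \<circ>\<^sub>p [:0, 0, 1:] = (char_poly A)^2"
proof (rule poly_eq_poly_eq_iff[THEN iffD1, OF ext])
  fix s :: 'a
  define M where "M = s \<cdot>\<^sub>m 1\<^sub>m n - A"
  have M: "M \<in> carrier_mat n n"
    using A by (simp add: M_def minus_carrier_mat)
  have "M\<^sup>T = s \<cdot>\<^sub>m 1\<^sub>m n - A\<^sup>T"
    using A by (intro eq_matI) (auto simp: M_def)
  also have "\<dots> = s \<cdot>\<^sub>m 1\<^sub>m n + A"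
    unfolding skew using A by (intro eq_matI) auto
  finally have MT: "M\<^sup>T = s \<cdot>\<^sub>m 1\<^sub>m n + A" .
  have "M * M\<^sup>T = M * (s \<cdot>\<^sub>m 1\<^sub>m n) + M * A"
    unfolding MT by (rule mult_add_distrib_mat[OF M _ A]) simp
  also have "M * (s \<cdot>\<^sub>m 1\<^sub>m n) = s \<cdot>\<^sub>m M"
    using M by (simp add: mult_smult_distrib[of _ n n _ n])
  also have "M * A = s \<cdot>\<^sub>m A - A * A"
    using A by (simp add: M_def minus_mult_distrib_mat[of _ n n] mult_smult_assoc_mat[of _ n n])
  also have "s \<cdot>\<^sub>m M + (s \<cdot>\<^sub>m A - A * A) = (s * s) \<cdot>\<^sub>m 1\<^sub>m n - A * A"
    using A by (intro eq_matI) (auto simp: M_def algebra_simps)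
  finally have "M * M\<^sup>T = (s * s) \<cdot>\<^sub>m 1\<^sub>m n - A * A" .
  then have square: "- char_matrix (A * A) (s^2) = M * M\<^sup>T"
    using A by (intro eq_matI) (auto simp: char_matrix_def power2_eq_square)
  have "- char_matrix A s = M"
    using A by (intro eq_matI) (auto simp: M_def char_matrix_def)
  then have root: "poly (char_poly A) s = det M"
    by (simp add: char_poly_matrix[OF A])
  have "poly (char_poly (A * A) \<circ>\<^sub>p [:0, 0, 1:]) s = det (- char_matrix (A * A) (s^2))"
    by (simp add: poly_pcompose char_poly_matrix[OF mult_carrier_mat[OF A A]] power2_eq_square)
  also have "\<dots> = det M * det M"
    unfolding square using M by (simp add: det_mult det_transpose)
  also have "\<dots> = poly ((char_poly A)^2) s"
    by (simp add: root power2_eq_square)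
  finally show "poly (char_poly (A * A) \<circ>\<^sub>p [:0, 0, 1:]) s = poly ((char_poly A)^2) s" .
qed

lemma eq_uminus_if_add_eq_zero_mat:
  fixes A B :: "'a :: group_add mat"
  assumes "A \<in> carrier_mat n m" and "B \<in> carrier_mat n m" and "A + B = 0\<^sub>m n m"
  shows "A = - B"
proof (rule eq_matI)
  fix i j
  assume "i < dim_row (- B)" and "j < dim_col (- B)"
  moreover from this have "(A + B) $$ (i, j) = 0"
    using assms(2,3) by simp
  ultimately show "A $$ (i, j) = (- B) $$ (i, j)"
    using assms(1,2) by (simp add: eq_neg_iff_add_eq_0)
qed (use assms in auto)

definition mat_deriv :: "nat \<Rightarrow> (real \<Rightarrow> real mat) \<Rightarrow> real \<Rightarrow> real mat" where
  "mat_deriv n F t = mat n n (\<lambda>(i, j). deriv (\<lambda>s. F s $$ (i, j)) t)"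

definition mat_has_deriv :: "nat \<Rightarrow> (real \<Rightarrow> real mat) \<Rightarrow> real mat \<Rightarrow> real \<Rightarrow> bool" where
  "mat_has_deriv n F D t \<longleftrightarrow> D \<in> carrier_mat n n \<and>
     (\<forall>i<n. \<forall>j<n. ((\<lambda>s. F s $$ (i, j)) has_real_derivative D $$ (i, j)) (at t))"

lemma mat_has_deriv_carrier: "mat_has_deriv n F D t \<Longrightarrow> D \<in> carrier_mat n n"
  by (simp add: mat_has_deriv_def)

lemma mat_has_deriv_unique:
  assumes "mat_has_deriv n F D t" and "mat_has_deriv n F E t"
  shows "D = E"
proof (rule eq_matI)
  fix i j
  assume "i < dim_row E" and "j < dim_col E"
  then have "i < n" and "j < n"
    using mat_has_deriv_carrier[OF assms(2)] by auto
  then have "((\<lambda>s. F s $$ (i, j)) has_real_derivative D $$ (i, j)) (at t)"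
    and "((\<lambda>s. F s $$ (i, j)) has_real_derivative E $$ (i, j)) (at t)"
    using assms by (simp_all add: mat_has_deriv_def)
  then show "D $$ (i, j) = E $$ (i, j)"
    by (rule DERIV_unique)
qed (use assms in \<open>auto simp: mat_has_deriv_def\<close>)

lemma mat_has_deriv_const: "mat_has_deriv n (\<lambda>_. C) (0\<^sub>m n n) t"
  by (simp add: mat_has_deriv_def)

lemma mat_has_deriv_uminus:
  assumes "\<And>s. F s \<in> carrier_mat n n" and "mat_has_deriv n F D t"
  shows "mat_has_deriv n (\<lambda>s. - F s) (- D) t"
  using assms carrier_matD[OF assms(1)] by (auto simp: mat_has_deriv_def intro!: DERIV_minus)

lemma mat_has_deriv_transpose:
  assumes "\<And>s. F s \<in> carrier_mat n n" and "mat_has_deriv n F D t"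
  shows "mat_has_deriv n (\<lambda>s. (F s)\<^sup>T) D\<^sup>T t"
  using assms carrier_matD[OF assms(1)] by (auto simp: mat_has_deriv_def)

lemma mat_has_deriv_mult:
  assumes "\<And>s. F s \<in> carrier_mat n n" and "\<And>s. G s \<in> carrier_mat n n"
    and "mat_has_deriv n F D t" and "mat_has_deriv n G E t"
  shows "mat_has_deriv n (\<lambda>s. F s * G s) (D * G t + F t * E) t"
  unfolding mat_has_deriv_def
proof (intro conjI allI impI)
  fix i j
  assume "i < n" and "j < n"
  have "((\<lambda>s. \<Sum>k<n. F s $$ (i, k) * G s $$ (k, j)) has_real_derivative
      (\<Sum>k<n. D $$ (i, k) * G t $$ (k, j) + F t $$ (i, k) * E $$ (k, j))) (at t)"
    using assms \<open>i < n\<close> \<open>j < n\<close>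
    by (auto simp: mat_has_deriv_def algebra_simps intro!: DERIV_sum derivative_eq_intros)
  then show "((\<lambda>s. (F s * G s) $$ (i, j)) has_real_derivative (D * G t + F t * E) $$ (i, j)) (at t)"
    using assms carrier_matD[OF assms(1)] carrier_matD[OF assms(2)] \<open>i < n\<close> \<open>j < n\<close>
      carrier_matD[OF mat_has_deriv_carrier[OF assms(3)]] carrier_matD[OF mat_has_deriv_carrier[OF assms(4)]]
    by (simp add: mat_has_deriv_def scalar_prod_def atLeast0LessThan sum.distrib)
qed (rule add_carrier_mat[OF mult_carrier_mat[OF assms(1) mat_has_deriv_carrier[OF assms(4)]]])

lemma mat_has_deriv_mat_deriv:
  assumes "\<And>i j. i < n \<Longrightarrow> j < n \<Longrightarrow> (\<lambda>s. F s $$ (i, j)) differentiable (at t)"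
  shows "mat_has_deriv n F (mat_deriv n F t) t"
  using assms by (simp add: mat_has_deriv_def mat_deriv_def DERIV_deriv_iff_real_differentiable)

lemma mat_second_deriv_eq_mat_deriv_mat_deriv:
  "mat_second_deriv n F t = mat_deriv n (mat_deriv n F) t"
  by (intro eq_matI) (auto simp: mat_second_deriv_def mat_deriv_def)

lemma orthogonal_curve_skew:
  assumes carrier: "\<And>s. Q s \<in> carrier_mat n n"
    and orthogonal: "\<And>s. (Q s)\<^sup>T * Q s = 1\<^sub>m n"
    and Q': "\<And>s. mat_has_deriv n Q (Q' s) s"
  shows "((Q t)\<^sup>T * Q' t)\<^sup>T = - ((Q t)\<^sup>T * Q' t)"
proof -
  have Q'_carrier: "Q' t \<in> carrier_mat n n"
    using Q' by (rule mat_has_deriv_carrier)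
  have "mat_has_deriv n (\<lambda>s. (Q s)\<^sup>T * Q s) ((Q' t)\<^sup>T * Q t + (Q t)\<^sup>T * Q' t) t"
    using carrier Q' by (intro mat_has_deriv_mult mat_has_deriv_transpose) auto
  moreover have "mat_has_deriv n (\<lambda>s. (Q s)\<^sup>T * Q s) (0\<^sub>m n n) t"
    unfolding orthogonal by (rule mat_has_deriv_const)
  ultimately have "(Q' t)\<^sup>T * Q t + (Q t)\<^sup>T * Q' t = 0\<^sub>m n n"
    by (rule mat_has_deriv_unique)
  then have "(Q' t)\<^sup>T * Q t = - ((Q t)\<^sup>T * Q' t)"
    using carrier Q'_carrier
    by (intro eq_uminus_if_add_eq_zero_mat) (auto simp: mult_carrier_mat[of _ n n])
  then show ?thesis
    using carrier Q'_carrier by (simp add: transpose_mult[of _ n n _ n] mult_carrier_mat[of _ n n])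
qed

lemma orthogonal_curve_sym_second_deriv:
  assumes carrier: "\<And>s. Q s \<in> carrier_mat n n"
    and orthogonal: "\<And>s. (Q s)\<^sup>T * Q s = 1\<^sub>m n"
    and Q': "\<And>s. mat_has_deriv n Q (Q' s) s"
    and Q'': "\<And>s. mat_has_deriv n Q' (Q'' s) s"
  shows "sym_mat ((Q t)\<^sup>T * Q'' t) = - ((Q' t)\<^sup>T * Q' t)"
proof -
  have Q'_carrier: "\<And>s. Q' s \<in> carrier_mat n n" and Q''_carrier: "Q'' t \<in> carrier_mat n n"
    using Q' Q'' by (blast intro: mat_has_deriv_carrier)+
  define X where "X = (Q' t)\<^sup>T * Q' t"
  define Y where "Y = (Q t)\<^sup>T * Q'' t"
  have "mat_has_deriv n (\<lambda>s. (Q s)\<^sup>T * Q' s) (X + Y) t"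
    unfolding X_def Y_def
    using carrier Q'_carrier Q' Q'' by (intro mat_has_deriv_mult mat_has_deriv_transpose) auto
  moreover have "(Q s)\<^sup>T * Q' s \<in> carrier_mat n n" for s
    using carrier Q'_carrier by (metis mult_carrier_mat transpose_carrier_mat)
  ultimately have "mat_has_deriv n (\<lambda>s. ((Q s)\<^sup>T * Q' s)\<^sup>T) (X + Y)\<^sup>T t"
    and "mat_has_deriv n (\<lambda>s. - ((Q s)\<^sup>T * Q' s)) (- (X + Y)) t"
    by (simp_all add: mat_has_deriv_transpose mat_has_deriv_uminus)
  then have "(X + Y)\<^sup>T = - (X + Y)"
    unfolding orthogonal_curve_skew[OF carrier orthogonal Q'] by (rule mat_has_deriv_unique)
  moreover have "X\<^sup>T = X"
    using Q'_carrier by (simp add: X_def transpose_mult[of _ n n _ n])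
  moreover have "X \<in> carrier_mat n n" and "Y \<in> carrier_mat n n"
    using carrier Q'_carrier Q''_carrier by (simp_all add: X_def Y_def mult_carrier_mat[of _ n n])
  ultimately have eq: "X + Y\<^sup>T = - (X + Y)"
    by (simp add: transpose_add)
  have "sym_mat Y = - X"
  proof (rule eq_matI)
    fix i j
    assume "i < dim_row (- X)" and "j < dim_col (- X)"
    then have "i < n" and "j < n"
      using \<open>X \<in> carrier_mat n n\<close> by auto
    then have "X $$ (i, j) + Y $$ (j, i) = - (X $$ (i, j) + Y $$ (i, j))"
      using arg_cong[OF eq, of "\<lambda>M. M $$ (i, j)"] \<open>X \<in> carrier_mat n n\<close> \<open>Y \<in> carrier_mat n n\<close>
      by simp
    then show "sym_mat Y $$ (i, j) = (- X) $$ (i, j)"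
      using \<open>i < n\<close> \<open>j < n\<close> \<open>X \<in> carrier_mat n n\<close> \<open>Y \<in> carrier_mat n n\<close>
      by (simp add: sym_mat_def)
  qed (use \<open>X \<in> carrier_mat n n\<close> \<open>Y \<in> carrier_mat n n\<close> in \<open>auto simp: sym_mat_def\<close>)
  then show ?thesis
    unfolding X_def Y_def .
qed

lemma transpose_mult_self_eq_neg_square_if_skew:
  fixes Q D :: "'a :: field mat"
  assumes Q: "Q \<in> carrier_mat n n" and D: "D \<in> carrier_mat n n"
    and orthogonal: "Q\<^sup>T * Q = 1\<^sub>m n" and skew: "(Q\<^sup>T * D)\<^sup>T = - (Q\<^sup>T * D)"
  shows "D\<^sup>T * D = - ((Q\<^sup>T * D) * (Q\<^sup>T * D))"
proof -
  have "Q * Q\<^sup>T = 1\<^sub>m n"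
    using mat_mult_left_right_inverse[of "Q\<^sup>T" n Q] Q orthogonal by simp
  then have "D\<^sup>T * D = (Q\<^sup>T * D)\<^sup>T * (Q\<^sup>T * D)"
    using Q D by (simp add: transpose_mult[of _ n n _ n] flip: assoc_mult_mat[of _ n n _ n _ n])
  also have "\<dots> = - ((Q\<^sup>T * D) * (Q\<^sup>T * D))"
    using Q D unfolding skew by simp
  finally show ?thesis .
qed

theorem lemma4:
  fixes n :: nat and Q :: "real \<Rightarrow> real mat"
  assumes "n \<ge> 1"
    and SO: "\<And>\<tau>. Q \<tau> \<in> carrier_mat n n \<and> (Q \<tau>)\<^sup>T * Q \<tau> = 1\<^sub>m n \<and> det (Q \<tau>) = 1"
    and C2: "\<And>i j. i < n \<Longrightarrow> j < n \<Longrightarrow> C2_real (\<lambda>t. Q t $$ (i,j))"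
  shows "\<forall>\<tau> lam. lam < 0 \<longrightarrow>
           eigenvalue (sym_mat ((Q \<tau>)\<^sup>T * mat_second_deriv n Q \<tau>)) lam \<longrightarrow>
           even (alg_mult (sym_mat ((Q \<tau>)\<^sup>T * mat_second_deriv n Q \<tau>)) lam)"
proof (intro allI impI)
  fix \<tau> lam :: real
  assume "lam < 0"
  have carrier: "\<And>t. Q t \<in> carrier_mat n n" and orthogonal: "\<And>t. (Q t)\<^sup>T * Q t = 1\<^sub>m n"
    using SO by auto
  define Q' where "Q' = mat_deriv n Q"
  have "(\<lambda>s. Q' s $$ (i, j)) = deriv (\<lambda>s. Q s $$ (i, j))" if "i < n" "j < n" for i j
    using that by (simp add: Q'_def mat_deriv_def)
  then have Q': "mat_has_deriv n Q (Q' t) t" and Q'': "mat_has_deriv n Q' (mat_deriv n Q' t) t" for t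
    using C2 unfolding Q'_def C2_real_def by (auto intro!: mat_has_deriv_mat_deriv)
  define A where "A = (Q \<tau>)\<^sup>T * Q' \<tau>"
  have A: "A \<in> carrier_mat n n"
    using carrier mat_has_deriv_carrier[OF Q'] by (metis A_def mult_carrier_mat transpose_carrier_mat)
  have skew: "A\<^sup>T = - A"
    unfolding A_def using carrier orthogonal Q' by (rule orthogonal_curve_skew)
  have "sym_mat ((Q \<tau>)\<^sup>T * mat_second_deriv n Q \<tau>) = A * A"
    unfolding mat_second_deriv_eq_mat_deriv_mat_deriv Q'_def[symmetric]
      orthogonal_curve_sym_second_deriv[OF carrier orthogonal Q' Q'']
      transpose_mult_self_eq_neg_square_if_skew[OF carrier mat_has_deriv_carrier[OF Q'] orthogonal
        skew[unfolded A_def]]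
    by (simp add: A_def)
  moreover have "char_poly (A * A) \<noteq> 0"
    using degree_monic_char_poly[of "A * A" n] A by auto
  ultimately show "even (alg_mult (sym_mat ((Q \<tau>)\<^sup>T * mat_second_deriv n Q \<tau>)) lam)"
    unfolding alg_mult_def
    using even_order_neg_if_pcompose_square_eq_square[OF char_poly_square_of_skew[OF A skew]] \<open>lam < 0\<close>
    by simp
qed

end
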